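(* Let $\mathcal{P}$ be a locally geometric poset of rank $r$ and write $\chi_{\mathcal{P}}(t)=c_rt^r+c_{r-1}t^{r-1}+\cdots+c_0$. Then $(-1)^{r-i}c_i>0$ for all $0\le i\le r$.
   Context: All posets are finite, have a unique minimal element $\hat0$ and are ranked (all maximal chains with top $x$ have the same length $\operatorname{rk}(x)$); $\operatorname{rk}(\mathcal{P})=\max_x\operatorname{rk}(x)$. $\chi_{\mathcal{P}}(t)=\sum_x\mu(\hat0,x)t^{\operatorname{rk}(\mathcal{P})-\operatorname{rk}(x)}$, $\mu$ the Möbius function. For $x,y$, $x\vee y$ is the set of minimal upper bounds. A lattice is geometric if for all $x,y$: $y$ covers $x$ iff there is an atom (rank-1 element) $a\not\le x$ with $y=x\vee a$. $\mathcal{P}$ is locally geometric if $\mathcal{P}_{\le x}$ is a geometric lattice for every $x\in\mathcal{P}$. *)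

theory Defs
  imports "HOL-Computational_Algebra.Polynomial"
begin

definition poset_on :: "'a set \<Rightarrow> ('a \<Rightarrow> 'a \<Rightarrow> bool) \<Rightarrow> bool" where
  "poset_on P le \<longleftrightarrow>
     (\<forall>x\<in>P. le x x) \<and>
     (\<forall>x\<in>P. \<forall>y\<in>P. le x y \<and> le y x \<longrightarrow> x = y) \<and>
     (\<forall>x\<in>P. \<forall>y\<in>P. \<forall>z\<in>P. le x y \<and> le y z \<longrightarrow> le x z)"

definition is_minimal :: "'a set \<Rightarrow> ('a \<Rightarrow> 'a \<Rightarrow> bool) \<Rightarrow> 'a \<Rightarrow> bool" where
  "is_minimal P le x \<longleftrightarrow> x \<in> P \<and> (\<forall>y\<in>P. le y x \<longrightarrow> y = x)"

definition has_unique_min :: "'a set \<Rightarrow> ('a \<Rightarrow> 'a \<Rightarrow> bool) \<Rightarrow> bool" where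
  "has_unique_min P le \<longleftrightarrow> (\<exists>!z. is_minimal P le z)"

definition pbot :: "'a set \<Rightarrow> ('a \<Rightarrow> 'a \<Rightarrow> bool) \<Rightarrow> 'a" where
  "pbot P le = (THE z. is_minimal P le z)"

definition covers :: "'a set \<Rightarrow> ('a \<Rightarrow> 'a \<Rightarrow> bool) \<Rightarrow> 'a \<Rightarrow> 'a \<Rightarrow> bool" where
  "covers P le x y \<longleftrightarrow> x \<in> P \<and> y \<in> P \<and> le x y \<and> x \<noteq> y \<and>
     \<not> (\<exists>z\<in>P. le x z \<and> le z y \<and> z \<noteq> x \<and> z \<noteq> y)"

definition max_chain_to :: "'a set \<Rightarrow> ('a \<Rightarrow> 'a \<Rightarrow> bool) \<Rightarrow> 'a list \<Rightarrow> 'a \<Rightarrow> bool" where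
  "max_chain_to P le c x \<longleftrightarrow> c \<noteq> [] \<and> set c \<subseteq> P \<and> hd c = pbot P le \<and> last c = x \<and>
     (\<forall>i. Suc i < length c \<longrightarrow> covers P le (c ! i) (c ! Suc i))"

definition ranked :: "'a set \<Rightarrow> ('a \<Rightarrow> 'a \<Rightarrow> bool) \<Rightarrow> bool" where
  "ranked P le \<longleftrightarrow> (\<forall>x\<in>P. \<forall>c c'. max_chain_to P le c x \<longrightarrow> max_chain_to P le c' x
       \<longrightarrow> length c = length c')"

definition prk :: "'a set \<Rightarrow> ('a \<Rightarrow> 'a \<Rightarrow> bool) \<Rightarrow> 'a \<Rightarrow> nat" where
  "prk P le x = (SOME n. \<exists>c. max_chain_to P le c x \<and> length c = Suc n)"

definition poset_rank :: "'a set \<Rightarrow> ('a \<Rightarrow> 'a \<Rightarrow> bool) \<Rightarrow> nat" where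
  "poset_rank P le = Max (prk P le ` P)"

text \<open>Moebius function: mu(x,x)=1, mu(x,y) = - sum_{x<=z<y} mu(x,z) for x<y, 0 otherwise.
  Defined by recursion with fuel; fuel card P suffices in a finite poset.\<close>
fun mob_fuel :: "nat \<Rightarrow> 'a set \<Rightarrow> ('a \<Rightarrow> 'a \<Rightarrow> bool) \<Rightarrow> 'a \<Rightarrow> 'a \<Rightarrow> int" where
  "mob_fuel 0 P le x y = (if x = y then 1 else 0)"
| "mob_fuel (Suc n) P le x y =
     (if x = y then 1
      else if le x y then - (\<Sum>z\<in>{z\<in>P. le x z \<and> le z y \<and> z \<noteq> y}. mob_fuel n P le x z)
      else 0)"

definition mobius :: "'a set \<Rightarrow> ('a \<Rightarrow> 'a \<Rightarrow> bool) \<Rightarrow> 'a \<Rightarrow> 'a \<Rightarrow> int" where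
  "mobius P le x y = mob_fuel (card P) P le x y"

definition char_poly :: "'a set \<Rightarrow> ('a \<Rightarrow> 'a \<Rightarrow> bool) \<Rightarrow> int poly" where
  "char_poly P le =
     (\<Sum>x\<in>P. monom (mobius P le (pbot P le) x) (poset_rank P le - prk P le x))"

definition min_ubs :: "'a set \<Rightarrow> ('a \<Rightarrow> 'a \<Rightarrow> bool) \<Rightarrow> 'a \<Rightarrow> 'a \<Rightarrow> 'a set" where
  "min_ubs P le x y = {u\<in>P. le x u \<and> le y u \<and>
      (\<forall>v\<in>P. le x v \<and> le y v \<and> le v u \<longrightarrow> v = u)}"

definition is_lattice :: "'a set \<Rightarrow> ('a \<Rightarrow> 'a \<Rightarrow> bool) \<Rightarrow> bool" where
  "is_lattice P le \<longleftrightarrow>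
     (\<forall>x\<in>P. \<forall>y\<in>P. \<exists>j\<in>P. le x j \<and> le y j \<and> (\<forall>u\<in>P. le x u \<and> le y u \<longrightarrow> le j u)) \<and>
     (\<forall>x\<in>P. \<forall>y\<in>P. \<exists>m\<in>P. le m x \<and> le m y \<and> (\<forall>u\<in>P. le u x \<and> le u y \<longrightarrow> le u m))"

definition is_atom :: "'a set \<Rightarrow> ('a \<Rightarrow> 'a \<Rightarrow> bool) \<Rightarrow> 'a \<Rightarrow> bool" where
  "is_atom P le a \<longleftrightarrow> covers P le (pbot P le) a"

definition geometric_lattice :: "'a set \<Rightarrow> ('a \<Rightarrow> 'a \<Rightarrow> bool) \<Rightarrow> bool" where
  "geometric_lattice P le \<longleftrightarrow> is_lattice P le \<and>
     (\<forall>x\<in>P. \<forall>y\<in>P. covers P le x y \<longleftrightarrow>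
        (\<exists>a\<in>P. is_atom P le a \<and> \<not> le a x \<and> min_ubs P le x a = {y}))"

definition locally_geometric :: "'a set \<Rightarrow> ('a \<Rightarrow> 'a \<Rightarrow> bool) \<Rightarrow> bool" where
  "locally_geometric P le \<longleftrightarrow> (\<forall>x\<in>P. geometric_lattice {y\<in>P. le y x} le)"

end

theory Submission
  imports Defs
begin

text \<open>The coefficient of t^i in the characteristic polynomial is the sum of mu(0,x)
  over the elements x of rank r - i, and every rank level up to r is nonempty. So it
  suffices that (-1)^rk(x) mu(0,x) > 0 for every x, which is shown by induction on the
  rank. For x > 0, choose a coatom y0 of the geometric lattice [0,x] and an atom a with
  y0 \<or> a = x. Weisner's theorem says that the sum of mu(0,y) over all y with
  y \<or> a = x vanishes. Apart from x itself, such a y does not lie above a, so y \<or> a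
  covers y, i.e. y is a coatom of [0,x]; the coatoms have the sign (-1)^(rk(x) - 1) by
  induction, and y0 is among them.\<close>

locale finite_poset =
  fixes P :: "'a set" and le :: "'a \<Rightarrow> 'a \<Rightarrow> bool"
  assumes finite_P: "finite P" and poset: "poset_on P le"
begin

lemma le_refl_on: "x \<in> P \<Longrightarrow> le x x"
  using poset unfolding poset_on_def by blast

lemma le_antisym_on: "x \<in> P \<Longrightarrow> y \<in> P \<Longrightarrow> le x y \<Longrightarrow> le y x \<Longrightarrow> x = y"
  using poset unfolding poset_on_def by blast

lemma le_trans_on: "x \<in> P \<Longrightarrow> y \<in> P \<Longrightarrow> z \<in> P \<Longrightarrow> le x y \<Longrightarrow> le y z \<Longrightarrow> le x z"
  using poset unfolding poset_on_def by blast

definition down_set :: "'a \<Rightarrow> 'a set" where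
  "down_set x = {y \<in> P. le y x}"

definition up_set :: "'a \<Rightarrow> 'a set" where
  "up_set x = {y \<in> P. le x y}"

definition interval :: "'a \<Rightarrow> 'a \<Rightarrow> 'a set" where
  "interval x y = {z \<in> P. le x z \<and> le z y}"

lemma finite_down_set: "finite (down_set x)"
  unfolding down_set_def using finite_P by simp

lemma down_set_subset: "down_set x \<subseteq> P"
  unfolding down_set_def by blast

lemma card_down_set_less:
  assumes "v \<in> P" "w \<in> P" "le v w" "v \<noteq> w"
  shows "card (down_set v) < card (down_set w)"
proof (rule psubset_card_mono[OF finite_down_set])
  have "down_set v \<subseteq> down_set w"
    unfolding down_set_def using assms le_trans_on by blast
  moreover have "w \<in> down_set w - down_set v"
    unfolding down_set_def using assms le_refl_on le_antisym_on by blast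
  ultimately show "down_set v \<subset> down_set w" by blast
qed

lemma card_up_set_less:
  assumes "v \<in> P" "w \<in> P" "le v w" "v \<noteq> w"
  shows "card (up_set w) < card (up_set v)"
proof (rule psubset_card_mono)
  show "finite (up_set v)" unfolding up_set_def using finite_P by simp
  have "up_set w \<subseteq> up_set v"
    unfolding up_set_def using assms le_trans_on by blast
  moreover have "v \<in> up_set v - up_set w"
    unfolding up_set_def using assms le_refl_on le_antisym_on by blast
  ultimately show "up_set w \<subset> up_set v" by blast
qed

lemma card_interval_less:
  assumes "x \<in> P" "y \<in> P" "z \<in> P" "le x z" "le z y" "z \<noteq> y"
  shows "card (interval x z) < card (interval x y)"
proof (rule psubset_card_mono)
  show "finite (interval x y)" unfolding interval_def using finite_P by simp
  have "interval x z \<subseteq> interval x y"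
    unfolding interval_def using assms le_trans_on by blast
  moreover have "y \<in> interval x y - interval x z"
    unfolding interval_def using assms le_trans_on le_refl_on le_antisym_on by blast
  ultimately show "interval x z \<subset> interval x y" by blast
qed

lemma card_interval_ge_2:
  assumes "x \<in> P" "y \<in> P" "le x y" "x \<noteq> y"
  shows "2 \<le> card (interval x y)"
proof -
  have "{x, y} \<subseteq> interval x y" unfolding interval_def using assms le_refl_on by auto
  then have "card {x, y} \<le> card (interval x y)"
    using finite_P unfolding interval_def by (intro card_mono) auto
  then show ?thesis using assms by simp
qed

lemma card_interval_le: "card (interval x y) \<le> card P"
  unfolding interval_def using finite_P by (intro card_mono) auto

lemma ex_minimal_in:
  assumes "S \<subseteq> P" "S \<noteq> {}"
  shows "\<exists>m\<in>S. \<forall>s\<in>S. le s m \<longrightarrow> s = m"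
proof -
  obtain m where "is_arg_min (\<lambda>s. card (down_set s)) (\<lambda>s. s \<in> S) m"
    using ex_is_arg_min_if_finite[OF finite_subset[OF assms(1) finite_P] assms(2)] by blast
  then have m: "m \<in> S" and least: "\<And>s. s \<in> S \<Longrightarrow> \<not> card (down_set s) < card (down_set m)"
    unfolding is_arg_min_def by auto
  have "s = m" if s: "s \<in> S" "le s m" for s
  proof (rule ccontr)
    assume "s \<noteq> m"
    then have "card (down_set s) < card (down_set m)"
      using assms(1) s m by (intro card_down_set_less) auto
    with least[OF s(1)] show False ..
  qed
  with m show ?thesis by blast
qed

lemma ex_maximal_in:
  assumes "S \<subseteq> P" "S \<noteq> {}"
  shows "\<exists>m\<in>S. \<forall>s\<in>S. le m s \<longrightarrow> s = m"
proof -
  obtain m where "is_arg_min (\<lambda>s. card (up_set s)) (\<lambda>s. s \<in> S) m"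
    using ex_is_arg_min_if_finite[OF finite_subset[OF assms(1) finite_P] assms(2)] by blast
  then have m: "m \<in> S" and least: "\<And>s. s \<in> S \<Longrightarrow> \<not> card (up_set s) < card (up_set m)"
    unfolding is_arg_min_def by auto
  have "s = m" if s: "s \<in> S" "le m s" for s
  proof (rule ccontr)
    assume "s \<noteq> m"
    then have "card (up_set s) < card (up_set m)"
      using assms(1) s m by (intro card_up_set_less) auto
    with least[OF s(1)] show False ..
  qed
  with m show ?thesis by blast
qed

lemma ex_lower_cover:
  assumes "x \<in> P" "z \<in> P" "le z x" "z \<noteq> x"
  shows "\<exists>y. covers P le y x"
proof -
  let ?S = "{y \<in> P. le y x \<and> y \<noteq> x}"
  have "?S \<subseteq> P" "?S \<noteq> {}" using assms by auto
  then obtain y where y: "y \<in> ?S" and max: "\<forall>s\<in>?S. le y s \<longrightarrow> s = y"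
    using ex_maximal_in by blast
  have "covers P le y x"
    unfolding covers_def using y max assms(1) by auto
  then show ?thesis ..
qed

lemma covers_down_set_iff:
  assumes "x \<in> P" "y \<in> down_set x" "z \<in> down_set x"
  shows "covers (down_set x) le y z \<longleftrightarrow> covers P le y z"
proof -
  have "s \<in> down_set x" if "s \<in> P" "le s z" for s
    using that assms le_trans_on unfolding down_set_def by blast
  then have "(\<exists>s\<in>down_set x. le y s \<and> le s z \<and> s \<noteq> y \<and> s \<noteq> z) \<longleftrightarrow>
             (\<exists>s\<in>P. le y s \<and> le s z \<and> s \<noteq> y \<and> s \<noteq> z)"
    using down_set_subset by blast
  moreover have "y \<in> P" "z \<in> P" using assms down_set_subset by auto
  ultimately show ?thesis
    using assms unfolding covers_def by simp
qed

lemma mob_fuel_trivial: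
  "x = y \<or> \<not> le x y \<Longrightarrow> mob_fuel n P le x y = (if x = y then 1 else 0)"
  by (cases n) auto

lemma mob_fuel_eq:
  assumes "x \<in> P" "y \<in> P" "card (interval x y) \<le> n" "card (interval x y) \<le> m"
  shows "mob_fuel n P le x y = mob_fuel m P le x y"
  using assms(2-)
proof (induction n arbitrary: m y)
  case 0
  then have "x = y \<or> \<not> le x y"
    using card_interval_ge_2[OF assms(1) "0.prems"(1)] by fastforce
  then show ?case by (simp only: mob_fuel_trivial)
next
  case (Suc n)
  show ?case
  proof (cases "x = y \<or> \<not> le x y")
    case True
    then show ?thesis by (simp only: mob_fuel_trivial)
  next
    case False
    then obtain m' where m: "m = Suc m'"
      using card_interval_ge_2[OF assms(1) Suc.prems(1)] Suc.prems(3) by (cases m) auto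
    let ?S = "{z \<in> P. le x z \<and> le z y \<and> z \<noteq> y}"
    have "(\<Sum>z\<in>?S. mob_fuel n P le x z) = (\<Sum>z\<in>?S. mob_fuel m' P le x z)"
    proof (rule sum.cong[OF refl])
      fix z assume z: "z \<in> ?S"
      then have "card (interval x z) < card (interval x y)"
        using assms(1) Suc.prems(1) by (intro card_interval_less) auto
      then show "mob_fuel n P le x z = mob_fuel m' P le x z"
        using Suc.IH[of z m'] z Suc.prems m by simp
    qed
    then show ?thesis using False m by simp
  qed
qed

lemma mobius_refl: "mobius P le x x = 1"
  unfolding mobius_def by (cases "card P") simp_all

lemma mobius_rec:
  assumes "x \<in> P" "y \<in> P" "le x y" "x \<noteq> y"
  shows "mobius P le x y = - (\<Sum>z \<in> {z \<in> P. le x z \<and> le z y \<and> z \<noteq> y}. mobius P le x z)"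
proof -
  obtain k where k: "card P = Suc k"
    using card_interval_ge_2[OF assms] card_interval_le[of x y] by (cases "card P") auto
  let ?S = "{z \<in> P. le x z \<and> le z y \<and> z \<noteq> y}"
  have "(\<Sum>z\<in>?S. mob_fuel k P le x z) = (\<Sum>z\<in>?S. mobius P le x z)"
  proof (rule sum.cong[OF refl])
    fix z assume z: "z \<in> ?S"
    then have "card (interval x z) < card (interval x y)"
      using assms by (intro card_interval_less) auto
    then show "mob_fuel k P le x z = mobius P le x z"
      unfolding mobius_def using mob_fuel_eq[of x z k "card P"] card_interval_le[of x y] k z assms(1)
      by simp
  qed
  then show ?thesis unfolding mobius_def using k assms by simp
qed

end

locale finite_poset_bot = finite_poset +
  assumes unique_min: "has_unique_min P le"
begin

abbreviation bottom :: 'a where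
  "bottom \<equiv> pbot P le"

abbreviation mu :: "'a \<Rightarrow> int" where
  "mu y \<equiv> mobius P le bottom y"

lemma bottom_minimal: "is_minimal P le bottom"
  using unique_min unfolding has_unique_min_def pbot_def by (rule theI')

lemma bottom_in: "bottom \<in> P"
  using bottom_minimal unfolding is_minimal_def by blast

lemma bottom_le:
  assumes "x \<in> P"
  shows "le bottom x"
proof -
  have "down_set x \<subseteq> P" "x \<in> down_set x"
    using assms le_refl_on unfolding down_set_def by auto
  then obtain m where m: "m \<in> down_set x" and min: "\<forall>s\<in>down_set x. le s m \<longrightarrow> s = m"
    using ex_minimal_in by blast
  have "is_minimal P le m"
    unfolding is_minimal_def
  proof (intro conjI ballI impI)
    show "m \<in> P" using m down_set_subset by blast
    fix s assume "s \<in> P" "le s m"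
    then have "s \<in> down_set x"
      using m assms le_trans_on unfolding down_set_def by blast
    then show "s = m" using min \<open>le s m\<close> by blast
  qed
  then have "m = bottom"
    using unique_min bottom_minimal unfolding has_unique_min_def by blast
  then show ?thesis using m unfolding down_set_def by simp
qed

lemma sum_mu_down_set:
  assumes "w \<in> P" "w \<noteq> bottom"
  shows "(\<Sum>y\<in>down_set w. mu y) = 0"
proof -
  have "down_set w = insert w {z \<in> P. le bottom z \<and> le z w \<and> z \<noteq> w}"
    using assms le_refl_on bottom_le unfolding down_set_def by auto
  then have "(\<Sum>y\<in>down_set w. mu y) = mu w + (\<Sum>z \<in> {z \<in> P. le bottom z \<and> le z w \<and> z \<noteq> w}. mu z)"
    using finite_P by simp
  also have "\<dots> = 0"
    using mobius_rec[OF bottom_in assms(1) bottom_le[OF assms(1)]] assms(2) by simp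
  finally show ?thesis .
qed

definition is_join_in :: "'a set \<Rightarrow> 'a \<Rightarrow> 'a \<Rightarrow> 'a \<Rightarrow> bool" where
  "is_join_in L y a j \<longleftrightarrow> j \<in> L \<and> le y j \<and> le a j \<and> (\<forall>u\<in>L. le y u \<and> le a u \<longrightarrow> le j u)"

lemma sum_mu_join_le_eq_zero:
  assumes x: "x \<in> P" and a: "a \<in> down_set x" "a \<noteq> bottom"
    and J: "\<And>y. y \<in> down_set x \<Longrightarrow> is_join_in (down_set x) y a (J y)"
    and w: "w \<in> down_set x"
  shows "(\<Sum>y \<in> {y \<in> down_set x. le (J y) w}. mu y) = 0"
proof (cases "le a w")
  case True
  have "{y \<in> down_set x. le (J y) w} = down_set w"
  proof (intro equalityI subsetI)
    fix y assume "y \<in> {y \<in> down_set x. le (J y) w}"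
    then show "y \<in> down_set w"
      using J[of y] w down_set_subset le_trans_on unfolding is_join_in_def down_set_def by blast
  next
    fix y assume y: "y \<in> down_set w"
    then have "y \<in> down_set x"
      using w x le_trans_on unfolding down_set_def by blast
    then show "y \<in> {y \<in> down_set x. le (J y) w}"
      using J[of y] y w True unfolding is_join_in_def down_set_def by blast
  qed
  moreover have "w \<noteq> bottom"
    using True a bottom_in bottom_le le_antisym_on down_set_subset by blast
  ultimately show ?thesis
    using sum_mu_down_set w down_set_subset by auto
next
  case False
  have "\<not> le (J y) w" if "y \<in> down_set x" for y
    using J[OF that] False a w down_set_subset le_trans_on unfolding is_join_in_def by blast
  then have "{y \<in> down_set x. le (J y) w} = {}" by blast
  then show ?thesis by (metis sum.empty)
qed

theorem weisner:
  assumes x: "x \<in> P" and a: "a \<in> down_set x" "a \<noteq> bottom"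
    and J: "\<And>y. y \<in> down_set x \<Longrightarrow> is_join_in (down_set x) y a (J y)"
    and w: "w \<in> down_set x"
  shows "(\<Sum>y \<in> {y \<in> down_set x. J y = w}. mu y) = 0"
  using w
proof (induction "card (down_set w)" arbitrary: w rule: less_induct)
  case less
  let ?f = "\<lambda>v. \<Sum>y \<in> {y \<in> down_set x. J y = v}. mu y"
  have wP: "w \<in> P" using less.prems down_set_subset by blast
  have "0 = (\<Sum>y \<in> {y \<in> down_set x. le (J y) w}. mu y)"
    using sum_mu_join_le_eq_zero[OF x a J less.prems] by simp
  also have "\<dots> = (\<Sum>v \<in> down_set w. \<Sum>y \<in> {y \<in> {y \<in> down_set x. le (J y) w}. J y = v}. mu y)"
    by (rule sum.group[symmetric])
      (use finite_P finite_down_set J in \<open>auto simp: is_join_in_def down_set_def\<close>)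
  also have "\<dots> = (\<Sum>v \<in> down_set w. ?f v)"
    by (intro sum.cong refl arg_cong[where f = "\<lambda>S. sum mu S"]) (auto simp: down_set_def)
  also have "\<dots> = ?f w + (\<Sum>v \<in> down_set w - {w}. ?f v)"
    using wP le_refl_on finite_down_set by (subst sum.remove[of _ w]) (auto simp: down_set_def)
  also have "(\<Sum>v \<in> down_set w - {w}. ?f v) = 0"
  proof (rule sum.neutral, rule ballI)
    fix v assume v: "v \<in> down_set w - {w}"
    then have "card (down_set v) < card (down_set w)"
      using wP by (intro card_down_set_less) (auto simp: down_set_def)
    moreover have "v \<in> down_set x"
      using v less.prems x le_trans_on unfolding down_set_def by blast
    ultimately show "?f v = 0" using less.hyps by blast
  qed
  finally show ?case by simp
qed

lemma max_chain_bottom: "max_chain_to P le [bottom] bottom"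
  unfolding max_chain_to_def using bottom_in by simp

lemma max_chain_snoc:
  assumes c: "max_chain_to P le c y" and cov: "covers P le y x"
  shows "max_chain_to P le (c @ [x]) x"
  unfolding max_chain_to_def
proof (intro conjI allI impI)
  show "c @ [x] \<noteq> []" "last (c @ [x]) = x" by simp_all
  show "set (c @ [x]) \<subseteq> P" "hd (c @ [x]) = bottom"
    using c cov unfolding max_chain_to_def covers_def by auto
  fix i assume i: "Suc i < length (c @ [x])"
  show "covers P le ((c @ [x]) ! i) ((c @ [x]) ! Suc i)"
  proof (cases "Suc i < length c")
    case True
    then show ?thesis using c unfolding max_chain_to_def by (simp add: nth_append)
  next
    case False
    then have "Suc i = length c" using i by simp
    moreover have "c ! i = y"
      using c calculation unfolding max_chain_to_def by (metis diff_Suc_1 last_conv_nth)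
    ultimately show ?thesis using cov by (simp add: nth_append)
  qed
qed

lemma ex_max_chain:
  assumes "x \<in> P"
  shows "\<exists>c. max_chain_to P le c x"
  using assms
proof (induction "card (down_set x)" arbitrary: x rule: less_induct)
  case less
  show ?case
  proof (cases "x = bottom")
    case True
    then show ?thesis using max_chain_bottom by blast
  next
    case False
    then obtain y where y: "covers P le y x"
      using ex_lower_cover[OF less.prems bottom_in bottom_le[OF less.prems]] by blast
    then have "card (down_set y) < card (down_set x)"
      unfolding covers_def by (intro card_down_set_less) auto
    then obtain c where "max_chain_to P le c y"
      using less.hyps y unfolding covers_def by blast
    then show ?thesis using max_chain_snoc y by blast
  qed
qed

lemma prk_le_poset_rank: "x \<in> P \<Longrightarrow> prk P le x \<le> poset_rank P le"
  unfolding poset_rank_def using finite_P by simp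

lemma ex_prk_eq_poset_rank: "\<exists>x\<in>P. prk P le x = poset_rank P le"
proof -
  have "poset_rank P le \<in> prk P le ` P"
    unfolding poset_rank_def using finite_P bottom_in by (intro Max_in) auto
  then show ?thesis by auto
qed

lemma coeff_char_poly:
  assumes "i \<le> poset_rank P le"
  shows "coeff (char_poly P le) i = (\<Sum>x \<in> {x \<in> P. prk P le x = poset_rank P le - i}. mu x)"
proof -
  have "coeff (char_poly P le) i = (\<Sum>x\<in>P. if poset_rank P le - prk P le x = i then mu x else 0)"
    unfolding char_poly_def by (simp add: coeff_sum coeff_monom)
  also have "\<dots> = (\<Sum>x\<in>P. if prk P le x = poset_rank P le - i then mu x else 0)"
    using prk_le_poset_rank assms by (intro sum.cong) auto
  also have "\<dots> = (\<Sum>x \<in> {x \<in> P. prk P le x = poset_rank P le - i}. mu x)"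
    using finite_P by (simp add: sum.inter_filter)
  finally show ?thesis .
qed

end

locale ranked_poset = finite_poset_bot +
  assumes ranked: "ranked P le"
begin

lemma length_max_chain:
  assumes c: "max_chain_to P le c x"
  shows "length c = Suc (prk P le x)"
proof -
  have x: "x \<in> P" using c unfolding max_chain_to_def by (metis last_in_set subsetD)
  have "\<exists>c'. max_chain_to P le c' x \<and> length c' = Suc (length c - 1)"
    using c unfolding max_chain_to_def by (intro exI[of _ c]) auto
  then have "\<exists>c'. max_chain_to P le c' x \<and> length c' = Suc (prk P le x)"
    unfolding prk_def by (rule someI)
  then show ?thesis using ranked c x unfolding ranked_def by metis
qed

lemma prk_bottom: "prk P le bottom = 0"
  using length_max_chain[OF max_chain_bottom] by simp

lemma prk_covers: "covers P le y x \<Longrightarrow> prk P le x = Suc (prk P le y)"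
  using ex_max_chain length_max_chain max_chain_snoc unfolding covers_def
  by (metis length_append_singleton nat.inject)

lemma ex_prk_eq:
  assumes "x \<in> P" "k \<le> prk P le x"
  shows "\<exists>y\<in>P. prk P le y = k"
  using assms
proof (induction "prk P le x" arbitrary: x)
  case 0
  then show ?case by auto
next
  case (Suc n)
  show ?case
  proof (cases "k = prk P le x")
    case True
    then show ?thesis using Suc.prems by blast
  next
    case False
    have "x \<noteq> bottom" using prk_bottom Suc.hyps(2) by auto
    then obtain y where y: "covers P le y x"
      using ex_lower_cover[OF Suc.prems(1) bottom_in bottom_le[OF Suc.prems(1)]] by blast
    then have "prk P le y = n" "y \<in> P"
      using prk_covers Suc.hyps(2) unfolding covers_def by auto
    then show ?thesis using Suc.hyps Suc.prems False by auto
  qed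
qed

end

locale locally_geometric_poset = ranked_poset +
  assumes locally_geometric: "locally_geometric P le"
begin

lemma geometric_down_set: "x \<in> P \<Longrightarrow> geometric_lattice (down_set x) le"
  using locally_geometric unfolding locally_geometric_def down_set_def by blast

lemma pbot_down_set:
  assumes "x \<in> P"
  shows "pbot (down_set x) le = bottom"
  unfolding pbot_def[of "down_set x"]
proof (rule the_equality)
  show "is_minimal (down_set x) le bottom"
    using bottom_in bottom_le assms le_antisym_on unfolding is_minimal_def down_set_def by blast
  fix z assume "is_minimal (down_set x) le z"
  then show "z = bottom"
    using bottom_in bottom_le assms unfolding is_minimal_def down_set_def by auto
qed

lemma ex_join_in:
  assumes "x \<in> P" "a \<in> down_set x"
  shows "\<exists>J. \<forall>y\<in>down_set x. is_join_in (down_set x) y a (J y)"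
  using geometric_down_set[OF assms(1)] assms(2)
  unfolding geometric_lattice_def is_lattice_def is_join_in_def by metis

lemma min_ubs_eq_join:
  assumes "L \<subseteq> P" "is_join_in L y a j"
  shows "min_ubs L le y a = {j}"
  using assms le_antisym_on unfolding min_ubs_def is_join_in_def by blast

lemma covers_join_atom:
  assumes x: "x \<in> P" and a: "a \<in> down_set x" "is_atom (down_set x) le a"
    and y: "y \<in> down_set x" "\<not> le a y" and j: "is_join_in (down_set x) y a j"
  shows "covers P le y j"
proof -
  have "j \<in> down_set x" using j unfolding is_join_in_def by blast
  moreover have "min_ubs (down_set x) le y a = {j}"
    using min_ubs_eq_join[OF down_set_subset j] .
  ultimately have "covers (down_set x) le y j"
    using geometric_down_set[OF x] a y unfolding geometric_lattice_def by blast
  then show ?thesis using covers_down_set_iff[OF x y(1)] \<open>j \<in> down_set x\<close> by blast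
qed

lemma mu_eq_neg_sum_lower_covers:
  assumes x: "x \<in> P" and "x \<noteq> bottom"
  shows "\<exists>S. finite S \<and> S \<noteq> {} \<and> (\<forall>y\<in>S. covers P le y x) \<and> mu x = - (\<Sum>y\<in>S. mu y)"
proof -
  let ?L = "down_set x"
  obtain y0 where y0: "covers P le y0 x"
    using ex_lower_cover[OF x bottom_in bottom_le[OF x]] assms(2) by blast
  have y0L: "y0 \<in> ?L" and xL: "x \<in> ?L"
    using y0 x le_refl_on unfolding covers_def down_set_def by auto
  then have "covers ?L le y0 x" using covers_down_set_iff[OF x] y0 by blast
  then obtain a where a: "a \<in> ?L" "is_atom ?L le a" "\<not> le a y0" "min_ubs ?L le y0 a = {x}"
    using geometric_down_set[OF x] y0L xL unfolding geometric_lattice_def by blast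
  have "a \<noteq> bottom" using a(2) pbot_down_set[OF x] unfolding is_atom_def covers_def by auto
  obtain J where J: "\<And>y. y \<in> ?L \<Longrightarrow> is_join_in ?L y a (J y)"
    using ex_join_in[OF x a(1)] by blast
  have J_self: "J y = y" if "y \<in> ?L" "le a y" for y
    using J[OF that(1)] that down_set_subset le_refl_on le_antisym_on unfolding is_join_in_def by blast
  let ?S = "{y \<in> ?L. J y = x \<and> y \<noteq> x}"
  have "{y \<in> ?L. J y = x} = insert x ?S"
    using J_self[OF xL] xL a(1) unfolding down_set_def by auto
  then have "mu x = - (\<Sum>y\<in>?S. mu y)"
    using weisner[OF x a(1) \<open>a \<noteq> bottom\<close> J xL] finite_down_set by simp
  moreover have "covers P le y x" if y: "y \<in> ?S" for y
  proof -
    have "\<not> le a y" using J_self[of y] y by force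
    then show ?thesis using covers_join_atom[OF x a(1,2) _ _ J] y by force
  qed
  moreover have "y0 \<in> ?S"
    using min_ubs_eq_join[OF down_set_subset J[OF y0L]] a(4) y0L y0 unfolding covers_def by auto
  ultimately show ?thesis using finite_down_set[of x] by (intro exI[of _ ?S]) auto
qed

lemma sign_mu:
  assumes "x \<in> P"
  shows "0 < (-1) ^ prk P le x * mu x"
  using assms
proof (induction "prk P le x" arbitrary: x rule: less_induct)
  case less
  show ?case
  proof (cases "x = bottom")
    case True
    then show ?thesis using prk_bottom mobius_refl by simp
  next
    case False
    then obtain S where S: "finite S" "S \<noteq> {}" and cov: "\<forall>y\<in>S. covers P le y x"
      and mu_x: "mu x = - (\<Sum>y\<in>S. mu y)"
      using mu_eq_neg_sum_lower_covers[OF less.prems] by blast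
    obtain n where n: "prk P le x = Suc n"
      using S(2) cov prk_covers by blast
    have "0 < (-1) ^ n * mu y" if "y \<in> S" for y
    proof -
      have "prk P le y = n" "y \<in> P"
        using cov that prk_covers n unfolding covers_def by auto
      then show ?thesis using less.hyps n by auto
    qed
    then have "0 < (\<Sum>y\<in>S. (-1) ^ n * mu y)"
      using S by (intro sum_pos) auto
    also have "\<dots> = (-1) ^ prk P le x * mu x"
      unfolding n mu_x by (simp add: sum_distrib_left sum_negf)
    finally show ?thesis .
  qed
qed

end

theorem lemma3p4:
  fixes P :: "'a set" and le :: "'a \<Rightarrow> 'a \<Rightarrow> bool"
  assumes "finite P" and "poset_on P le" and "has_unique_min P le"
    and "ranked P le" and "locally_geometric P le"
  shows "\<forall>i \<le> poset_rank P le.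
           (-1) ^ (poset_rank P le - i) * coeff (char_poly P le) i > 0"
proof (intro allI impI)
  interpret locally_geometric_poset P le
    using assms by unfold_locales
  fix i assume i: "i \<le> poset_rank P le"
  let ?k = "poset_rank P le - i"
  obtain x where "x \<in> P" "prk P le x = poset_rank P le"
    using ex_prk_eq_poset_rank by blast
  then have "{y \<in> P. prk P le y = ?k} \<noteq> {}"
    using ex_prk_eq[of x ?k] by auto
  moreover have "0 < (-1) ^ ?k * mu y" if "y \<in> {y \<in> P. prk P le y = ?k}" for y
    using sign_mu[of y] that by simp
  ultimately have "0 < (\<Sum>y \<in> {y \<in> P. prk P le y = ?k}. (-1) ^ ?k * mu y)"
    using finite_P by (intro sum_pos) auto
  then show "(-1) ^ ?k * coeff (char_poly P le) i > 0"
    unfolding coeff_char_poly[OF i] by (simp add: sum_distrib_left)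
qed

end
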